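(* Let $f:\mathbb{R}^n\to\mathbb{R}\cup\{+\infty\}$ be a polyhedral M-convex function with bounded $\operatorname{dom}_{\mathbb{R}} f$ and $x_0\in\operatorname{dom}_{\mathbb{R}} f$. Consider algorithm PM-LSD2: set $x:=x_0$; while $\phi_{\mathbb{R}}(x)<0$, replace $x$ by the output of PM-IncSlope$(x)$; when $\phi_{\mathbb{R}}(x)=0$ output $x$. Then PM-LSD2 terminates after finitely many calls of PM-IncSlope, and its output is a minimizer of $f$.
   Context: $N=\{1,\dots,n\}$; $\chi_i$ is the $i$-th unit vector. $\operatorname{dom}_{\mathbb{R}} f=\{x\in\mathbb{R}^n:f(x)<+\infty\}$. A polyhedral convex function $f:\mathbb{R}^n\to\mathbb{R}\cup\{+\infty\}$ (epigraph a polyhedron, $\operatorname{dom}_{\mathbb{R}} f\neq\emptyset$) is M-convex if for all $x,y\in\operatorname{dom}_{\mathbb{R}} f$ and every $i$ with $x(i)>y(i)$ there exist $j$ with $x(j)<y(j)$ and $\epsilon_0>0$ such that $f(x)+f(y)\ge f(x-\epsilon(\chi_i-\chi_j))+f(y+\epsilon(\chi_i-\chi_j))$ for all $\epsilon\in[0,\epsilon_0]$. For $x\in\operatorname{dom}_{\mathbb{R}} f$, $f'_{\mathbb{R}}(x;i,j)=\lim_{\alpha\downarrow0}(f(x+\alpha(\chi_i-\chi_j))-f(x))/\alpha$ (possibly $+\infty$), $\phi_{\mathbb{R}}(x)=\min_{i,j\in N}f'_{\mathbb{R}}(x;i,j)$, and $\bar c_{\mathbb{R}}(x;i,j)=\max\{\lambda\ge0: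 f(x+\lambda(\chi_i-\chi_j))-f(x)=\lambda f'_{\mathbb{R}}(x;i,j)\}$. Procedure PM-IncSlope$(x)$ (for $\phi_{\mathbb{R}}(x)<0$): set $y:=x$; for each $i\in N$ (each once, arbitrary order) and each $j\in N\setminus\{i\}$ (each once, arbitrary order), if $f'_{\mathbb{R}}(y;i,j)=\phi_{\mathbb{R}}(x)$ replace $y$ by $y+\bar c_{\mathbb{R}}(y;i,j)(\chi_i-\chi_j)$; output $y$. *)

theory Defs
  imports "HOL-Analysis.Analysis"
begin

text \<open>Functions R^n -> R \<union> {+\<infinity>} are modelled as maps into ereal never taking -\<infinity>.
  The index set N is the (finite) index type 'n; the unit vector chi_i is axis i 1.\<close>

definition dom_R :: "(real^'n \<Rightarrow> ereal) \<Rightarrow> (real^'n) set" where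
  "dom_R f = {x. f x < \<infinity>}"

definition polyhedral_convex :: "(real^'n \<Rightarrow> ereal) \<Rightarrow> bool" where
  "polyhedral_convex f \<longleftrightarrow> (\<forall>x. f x \<noteq> -\<infinity>) \<and>
     polyhedron {(x, t::real). f x \<le> ereal t} \<and> dom_R f \<noteq> {}"

definition dvec :: "'n::finite \<Rightarrow> 'n \<Rightarrow> real^'n" where
  "dvec i j = axis i 1 - axis j 1"

definition M_convex :: "(real^'n::finite \<Rightarrow> ereal) \<Rightarrow> bool" where
  "M_convex f \<longleftrightarrow> polyhedral_convex f \<and>
    (\<forall>x\<in>dom_R f. \<forall>y\<in>dom_R f. \<forall>i. x$i > y$i \<longrightarrow>
      (\<exists>j. x$j < y$j \<and> (\<exists>\<epsilon>0>0. \<forall>\<epsilon>\<in>{0..\<epsilon>0}.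
         f x + f y \<ge> f (x - \<epsilon> *\<^sub>R dvec i j) + f (y + \<epsilon> *\<^sub>R dvec i j))))"

definition dderiv :: "(real^'n::finite \<Rightarrow> ereal) \<Rightarrow> real^'n \<Rightarrow> 'n \<Rightarrow> 'n \<Rightarrow> ereal" where
  "dderiv f x i j = Lim (at_right (0::real))
      (\<lambda>\<alpha>. (f (x + \<alpha> *\<^sub>R dvec i j) - f x) / ereal \<alpha>)"

definition phi :: "(real^'n::finite \<Rightarrow> ereal) \<Rightarrow> real^'n \<Rightarrow> ereal" where
  "phi f x = Min {dderiv f x i j | i j. True}"

definition cbar :: "(real^'n::finite \<Rightarrow> ereal) \<Rightarrow> real^'n \<Rightarrow> 'n \<Rightarrow> 'n \<Rightarrow> real" where
  "cbar f x i j = (GREATEST lam::real. lam \<ge> 0 \<and>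
      f (x + lam *\<^sub>R dvec i j) - f x = ereal lam * dderiv f x i j)"

text \<open>One elementary update of PM-IncSlope, with slope value p = phi(x) of the input x.\<close>
definition incslope_step :: "(real^'n::finite \<Rightarrow> ereal) \<Rightarrow> ereal \<Rightarrow> 'n \<Rightarrow> 'n \<Rightarrow> real^'n \<Rightarrow> real^'n" where
  "incslope_step f p i j y =
     (if dderiv f y i j = p then y + cbar f y i j *\<^sub>R dvec i j else y)"

definition pm_incslope :: "(real^'n::finite \<Rightarrow> ereal) \<Rightarrow> 'n list \<Rightarrow> ('n \<Rightarrow> 'n list) \<Rightarrow> real^'n \<Rightarrow> real^'n" where
  "pm_incslope f is js x =
     fold (\<lambda>i y. fold (\<lambda>j. incslope_step f (phi f x) i j) (js i) y) is x"

definition valid_orders :: "'n::finite list \<Rightarrow> ('n \<Rightarrow> 'n list) \<Rightarrow> bool" where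
  "valid_orders is js \<longleftrightarrow> distinct is \<and> set is = UNIV \<and>
     (\<forall>i. distinct (js i) \<and> set (js i) = UNIV - {i})"

text \<open>y is a possible output of PM-IncSlope(x) (for some admissible choice of the orders).\<close>
definition incslope_out :: "(real^'n::finite \<Rightarrow> ereal) \<Rightarrow> real^'n \<Rightarrow> real^'n \<Rightarrow> bool" where
  "incslope_out f x y \<longleftrightarrow> (\<exists>is js. valid_orders is js \<and> y = pm_incslope f is js x)"

definition lsd2_run :: "(real^'n::finite \<Rightarrow> ereal) \<Rightarrow> real^'n \<Rightarrow> (nat \<Rightarrow> real^'n) \<Rightarrow> nat \<Rightarrow> bool" where
  "lsd2_run f x0 xs m \<longleftrightarrow> xs 0 = x0 \<and>
     (\<forall>k<m. phi f (xs k) < 0 \<and> incslope_out f (xs k) (xs (Suc k)))"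

end

theory Submission
  imports Defs
begin

text \<open>
  Near a point of its domain a polyhedral function is affine along every direction on a short
  segment, with slope either \<open>+\<infinity>\<close> or one of finitely many numbers read off from the
  inequalities describing its epigraph; so \<open>\<phi>\<close> takes only finitely many values on the domain.

  If all exchange slopes at \<open>x\<close> are at least \<open>p\<close>, then M-convexity gives the lower bound
  \<open>f y \<ge> f x + p/2 \<cdot> \<parallel>y - x\<parallel>\<^sub>1\<close>: otherwise take, in a compact sublevel set of
  \<open>f - p/2 \<cdot> \<parallel>\<cdot> - x\<parallel>\<^sub>1\<close>, a point nearest to \<open>x\<close>; one exchange step with \<open>x\<close> moves it
  closer while staying in the set. For \<open>p = 0\<close> this is optimality of the output.

  For \<open>p = \<phi>(x) < 0\<close>, PM-IncSlope only visits points where this bound is attained, and a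
  move of maximal length along a steepest pair \<open>(i, j)\<close> leaves that pair non-steepest.
  If a pair \<open>(a, b)\<close> becomes steepest by the move, exchanging the old point with a point
  slightly beyond the new one along \<open>(a, b)\<close> shows that \<open>(a, j)\<close> was steepest before the
  move and \<open>a \<noteq> i\<close>; hence pairs already handled stay non-steepest, every slope exceeds
  \<open>p\<close> after one call, \<open>\<phi>\<close> strictly increases along PM-LSD2, and termination follows from
  finiteness of the values of \<open>\<phi>\<close>.
\<close>

section \<open>Linear inequality systems\<close>

lemma polyhedral_convex_inequality_rep:
  fixes f :: "real^'n::finite \<Rightarrow> ereal"
  assumes "polyhedral_convex f"
  obtains F :: "((real^'n) \<times> real) set set" and A B C
  where "finite F" "\<And>x t. f x \<le> ereal t \<longleftrightarrow> (\<forall>h\<in>F. A h \<bullet> x + B h * t \<le> C h)"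
proof -
  obtain F where F: "finite F" "{(x, t). f x \<le> ereal t} = \<Inter>F"
    and halfspace: "\<forall>h\<in>F. \<exists>a b. a \<noteq> 0 \<and> h = {y. a \<bullet> y \<le> b}"
    using assms unfolding polyhedral_convex_def polyhedron_def by blast
  obtain a b where ab: "\<And>h. h \<in> F \<Longrightarrow> h = {y. a h \<bullet> y \<le> b h}"
    using bchoice[OF halfspace] by metis
  have inner_pair: "p \<bullet> (x, t) = fst p \<bullet> x + snd p * t" for p :: "(real^'n) \<times> real" and x t
    by (cases p) simp
  have "f x \<le> ereal t \<longleftrightarrow> (\<forall>h\<in>F. fst (a h) \<bullet> x + snd (a h) * t \<le> b h)" for x t
  proof -
    have "f x \<le> ereal t \<longleftrightarrow> (\<forall>h\<in>F. (x, t) \<in> h)"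
      using F(2) by blast
    also have "\<dots> \<longleftrightarrow> (\<forall>h\<in>F. fst (a h) \<bullet> x + snd (a h) * t \<le> b h)"
      by (intro ball_cong refl) (metis ab inner_pair mem_Collect_eq)
    finally show ?thesis .
  qed
  with F(1) show thesis by (rule that)
qed

lemma eventually_at_right_0_interval:
  assumes "eventually P (at_right (0::real))"
  obtains \<delta> where "\<delta> > 0" "\<And>\<tau>. 0 < \<tau> \<Longrightarrow> \<tau> \<le> \<delta> \<Longrightarrow> P \<tau>"
proof -
  obtain b where "b > 0" "\<And>\<tau>. 0 < \<tau> \<Longrightarrow> \<tau> < b \<Longrightarrow> P \<tau>"
    using assms unfolding eventually_at_right_field by auto
  then show thesis
    by (intro that[of "b / 2"]) auto
qed

lemma eventually_at_right_0_mult_less: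
  fixes r s :: "'h \<Rightarrow> real"
  assumes "finite H" "\<And>h. h \<in> H \<Longrightarrow> 0 < s h"
  shows "eventually (\<lambda>\<tau>. \<forall>h\<in>H. \<tau> * r h < s h) (at_right (0::real))"
proof (rule eventually_ball_finite[OF assms(1)], rule ballI)
  fix h assume "h \<in> H"
  have "((\<lambda>\<tau>. \<tau> * r h) \<longlongrightarrow> 0 * r h) (at_right 0)"
    by (intro tendsto_intros)
  then show "eventually (\<lambda>\<tau>. \<tau> * r h < s h) (at_right 0)"
    using assms(2)[OF \<open>h \<in> H\<close>] by (auto dest: order_tendstoD(2))
qed

lemma small_step_feasible:
  fixes A :: "'h \<Rightarrow> 'a::real_inner" and B C :: "'h \<Rightarrow> real"
  assumes "finite F" and feasible: "\<And>h. h \<in> F \<Longrightarrow> A h \<bullet> z + B h * t \<le> C h"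
    and active: "\<And>h. h \<in> F \<Longrightarrow> A h \<bullet> z + B h * t = C h \<Longrightarrow> A h \<bullet> e + B h * q \<le> 0"
  obtains \<delta> where "0 < \<delta>"
    "\<And>\<alpha> h. 0 \<le> \<alpha> \<Longrightarrow> \<alpha> \<le> \<delta> \<Longrightarrow> h \<in> F \<Longrightarrow> A h \<bullet> (z + \<alpha> *\<^sub>R e) + B h * (t + \<alpha> * q) \<le> C h"
proof -
  define H where "H = {h\<in>F. A h \<bullet> z + B h * t < C h}"
  have "eventually (\<lambda>\<alpha>. \<forall>h\<in>H. \<alpha> * (A h \<bullet> e + B h * q) < C h - A h \<bullet> z - B h * t) (at_right 0)"
    using \<open>finite F\<close> unfolding H_def by (intro eventually_at_right_0_mult_less) auto
  then obtain \<delta> where "0 < \<delta>"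
    and slack: "\<And>\<alpha>. 0 < \<alpha> \<Longrightarrow> \<alpha> \<le> \<delta> \<Longrightarrow> \<forall>h\<in>H. \<alpha> * (A h \<bullet> e + B h * q) < C h - A h \<bullet> z - B h * t"
    by (rule eventually_at_right_0_interval) blast
  have expand: "A h \<bullet> (z + \<alpha> *\<^sub>R e) + B h * (t + \<alpha> * q) = (A h \<bullet> z + B h * t) + \<alpha> * (A h \<bullet> e + B h * q)"
    for h \<alpha>
    by (simp add: inner_add_right algebra_simps)
  have "A h \<bullet> (z + \<alpha> *\<^sub>R e) + B h * (t + \<alpha> * q) \<le> C h" if "0 \<le> \<alpha>" "\<alpha> \<le> \<delta>" "h \<in> F" for \<alpha> h
  proof (cases "h \<in> H")
    case True
    then show ?thesis
      using slack[of \<alpha>] feasible[OF that(3)] that unfolding expand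
      by (cases "\<alpha> = 0") (auto simp: algebra_simps)
  next
    case False
    then have "A h \<bullet> z + B h * t = C h"
      using feasible[OF that(3)] that(3) unfolding H_def by simp
    then show ?thesis
      using active[OF that(3)] that(1) unfolding expand by (simp add: mult_nonneg_nonpos)
  qed
  with \<open>0 < \<delta>\<close> show thesis
    by (rule that)
qed

section \<open>The taxicab norm and exchange directions\<close>

definition norm1 :: "real^'n::finite \<Rightarrow> real" where
  "norm1 v = (\<Sum>k\<in>UNIV. \<bar>v$k\<bar>)"

lemma norm1_zero [simp]: "norm1 0 = 0"
  by (simp add: norm1_def)

lemma continuous_on_norm1_diff: "continuous_on S (\<lambda>y. norm1 (y - x))"
  unfolding norm1_def by (intro continuous_intros)

lemma dvec_nth: "dvec i j $ k = (if k = i then 1 else 0) - (if k = j then 1 else 0)"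
  unfolding dvec_def by (simp add: axis_def)

lemma dvec_same [simp]: "dvec i i = 0"
  by (simp add: dvec_def)

lemma dvec_swap: "dvec j i = - dvec i j"
  by (simp add: dvec_def)

lemma norm1_add_dvec:
  assumes "i \<noteq> j"
  shows "norm1 (v + t *\<^sub>R dvec i j) = norm1 v - \<bar>v$i\<bar> - \<bar>v$j\<bar> + \<bar>v$i + t\<bar> + \<bar>v$j - t\<bar>"
proof -
  have "norm1 (v + t *\<^sub>R dvec i j) =
      (\<Sum>k\<in>UNIV. \<bar>v$k\<bar> + (if k = i then \<bar>v$i + t\<bar> - \<bar>v$i\<bar> else 0)
                         + (if k = j then \<bar>v$j - t\<bar> - \<bar>v$j\<bar> else 0))"
    unfolding norm1_def by (rule sum.cong) (use assms in \<open>auto simp: dvec_nth\<close>)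
  then show ?thesis
    by (simp add: sum.distrib norm1_def)
qed

lemma norm1_add_dvec_le:
  assumes "0 \<le> t"
  shows "norm1 (v + t *\<^sub>R dvec i j) \<le> norm1 v + 2 * t"
  using assms norm1_add_dvec[of i j v t] by (cases "i = j") auto

lemma norm1_add_dvec_eq:
  assumes "i \<noteq> j" "0 \<le> v$i" "v$j \<le> 0" "0 \<le> t"
  shows "norm1 (v + t *\<^sub>R dvec i j) = norm1 v + 2 * t"
  using assms norm1_add_dvec[of i j v t] by simp

lemma norm1_add_dvec_le_self:
  assumes "i \<noteq> j" "0 \<le> t" "t \<le> - v$i \<or> t \<le> v$j"
  shows "norm1 (v + t *\<^sub>R dvec i j) \<le> norm1 v"
  using assms norm1_add_dvec[of i j v t] by linarith

lemma norm1_diff_dvec_eq: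
  assumes "i \<noteq> j" "t \<le> v$i" "v$j \<le> - t" "0 \<le> t"
  shows "norm1 (v - t *\<^sub>R dvec i j) = norm1 v - 2 * t"
  using assms norm1_add_dvec[of i j v "- t"] by simp

section \<open>Directional derivatives of polyhedral functions\<close>

definition dirderiv :: "(real^'n::finite \<Rightarrow> ereal) \<Rightarrow> real^'n \<Rightarrow> real^'n \<Rightarrow> ereal" where
  "dirderiv f x e = Lim (at_right (0::real)) (\<lambda>\<alpha>. (f (x + \<alpha> *\<^sub>R e) - f x) / ereal \<alpha>)"

lemma dderiv_eq_dirderiv: "dderiv f x i j = dirderiv f x (dvec i j)"
  unfolding dderiv_def dirderiv_def ..

lemma dirderiv_eqI:
  assumes "f x = ereal t" "\<delta> > 0"
    and "\<And>\<alpha>. 0 < \<alpha> \<Longrightarrow> \<alpha> \<le> \<delta> \<Longrightarrow> f (x + \<alpha> *\<^sub>R e) = f x + ereal \<alpha> * D"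
  shows "dirderiv f x e = D"
  unfolding dirderiv_def
proof (rule tendsto_Lim[OF trivial_limit_at_right_real], rule tendsto_eventually)
  have quotient: "(ereal t + ereal \<alpha> * D - ereal t) / ereal \<alpha> = D" if "0 < \<alpha>" for \<alpha>
    using that by (cases D) (simp_all add: ereal_divide_eq)
  have "(f (x + \<alpha> *\<^sub>R e) - f x) / ereal \<alpha> = D" if "0 < \<alpha>" "\<alpha> \<le> \<delta>" for \<alpha>
    using quotient[OF that(1)] by (simp only: assms(3)[OF that] assms(1))
  then show "eventually (\<lambda>\<alpha>. (f (x + \<alpha> *\<^sub>R e) - f x) / ereal \<alpha> = D) (at_right 0)"
    unfolding eventually_at_right_field using assms(2) by (metis order.strict_implies_order)
qed

lemma dirderiv_zero:
  assumes "f x = ereal t"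
  shows "dirderiv f x 0 = 0"
  using assms by (intro dirderiv_eqI[of _ _ _ 1]) auto

lemma finite_dderiv_values: "finite {dderiv f z i j | i j. True}"
proof -
  have "{dderiv f z i j | i j. True} = (\<lambda>(i, j). dderiv f z i j) ` UNIV"
    by auto
  then show ?thesis
    by simp
qed

lemma phi_le_dderiv: "phi f z \<le> dderiv f z i j"
  unfolding phi_def using finite_dderiv_values by (intro Min_le) auto

lemma phi_attained: "\<exists>i j. phi f z = dderiv f z i j"
proof -
  have "phi f z \<in> {dderiv f z i j | i j. True}"
    unfolding phi_def using finite_dderiv_values by (intro Min_in) auto
  then show ?thesis
    by blast
qed

locale polyhedral_fun =
  fixes f :: "real^'n::finite \<Rightarrow> ereal" and F :: "'h set"
    and A :: "'h \<Rightarrow> real^'n" and B :: "'h \<Rightarrow> real" and C :: "'h \<Rightarrow> real"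
  assumes finite_F: "finite F"
    and not_MInf: "f x \<noteq> -\<infinity>"
    and le_iff: "f x \<le> ereal t \<longleftrightarrow> (\<forall>h\<in>F. A h \<bullet> x + B h * t \<le> C h)"
begin

lemma dom_R_iff: "x \<in> dom_R f \<longleftrightarrow> f x \<noteq> \<infinity>"
  unfolding dom_R_def by (cases "f x") auto

lemma f_eq_ereal: "x \<in> dom_R f \<Longrightarrow> f x = ereal (real_of_ereal (f x))"
  using not_MInf[of x] unfolding dom_R_def by (cases "f x") auto

lemma closed_Collect_f_le:
  fixes \<gamma> :: "'b::topological_space \<Rightarrow> real^'n" and g :: "'b \<Rightarrow> real"
  assumes "continuous_on UNIV \<gamma>" "continuous_on UNIV g"
  shows "closed {s. f (\<gamma> s) \<le> ereal (g s)}"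
proof -
  have "{s. f (\<gamma> s) \<le> ereal (g s)} = (\<Inter>h\<in>F. {s. A h \<bullet> \<gamma> s + B h * g s \<le> C h})"
    using le_iff by auto
  also have "closed \<dots>"
    by (intro closed_INT ballI closed_Collect_le continuous_intros assms)
  finally show ?thesis .
qed

lemma convex_ineq:
  assumes "u \<in> dom_R f" "w \<in> dom_R f" "0 \<le> \<theta>" "\<theta> \<le> 1"
  shows "f ((1 - \<theta>) *\<^sub>R u + \<theta> *\<^sub>R w)
           \<le> ereal ((1 - \<theta>) * real_of_ereal (f u) + \<theta> * real_of_ereal (f w))"
proof -
  define tu tw where "tu = real_of_ereal (f u)" and "tw = real_of_ereal (f w)"
  have u: "A h \<bullet> u + B h * tu \<le> C h" and w: "A h \<bullet> w + B h * tw \<le> C h" if "h \<in> F" for h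
    using that le_iff[of u tu] le_iff[of w tw] f_eq_ereal[OF assms(1)] f_eq_ereal[OF assms(2)]
    unfolding tu_def tw_def by auto
  have "A h \<bullet> ((1 - \<theta>) *\<^sub>R u + \<theta> *\<^sub>R w) + B h * ((1 - \<theta>) * tu + \<theta> * tw) \<le> C h"
    if "h \<in> F" for h
  proof -
    have "A h \<bullet> ((1 - \<theta>) *\<^sub>R u + \<theta> *\<^sub>R w) + B h * ((1 - \<theta>) * tu + \<theta> * tw)
        = (1 - \<theta>) * (A h \<bullet> u + B h * tu) + \<theta> * (A h \<bullet> w + B h * tw)"
      by (simp add: inner_add_right algebra_simps)
    also have "\<dots> \<le> (1 - \<theta>) * C h + \<theta> * C h"
      using u[OF that] w[OF that] assms(3,4) by (intro add_mono mult_left_mono) auto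
    finally show ?thesis by (simp add: algebra_simps)
  qed
  then show ?thesis
    using le_iff unfolding tu_def tw_def by blast
qed

lemma B_nonpos:
  assumes "z \<in> dom_R f" "h \<in> F"
  shows "B h \<le> 0"
proof (rule ccontr)
  assume pos: "\<not> B h \<le> 0"
  define t0 where "t0 = real_of_ereal (f z)"
  define t where "t = t0 + (C h - A h \<bullet> z - B h * t0) / B h + 1"
  have "A h \<bullet> z + B h * t0 \<le> C h"
    using le_iff[of z t0] f_eq_ereal[OF assms(1)] assms(2) unfolding t0_def by simp
  then have "t0 \<le> t"
    using pos unfolding t_def by (simp add: divide_nonneg_pos)
  then have "f z \<le> ereal t"
    using f_eq_ereal[OF assms(1)] unfolding t0_def by (metis ereal_less_eq(3))
  then have "A h \<bullet> z + B h * t \<le> C h"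
    using le_iff assms(2) by blast
  moreover have "B h * t = C h - A h \<bullet> z + B h"
    using pos unfolding t_def by (simp add: field_simps)
  ultimately show False
    using pos by simp
qed

lemma PInf_beyond_wall:
  assumes "h \<in> F" "B h = 0" "A h \<bullet> z = C h" "0 < A h \<bullet> e" "0 < \<alpha>"
  shows "f (z + \<alpha> *\<^sub>R e) = \<infinity>"
proof -
  have "C h < A h \<bullet> (z + \<alpha> *\<^sub>R e)"
    using assms by (simp add: inner_add_right)
  then show ?thesis
    using le_iff[of "z + \<alpha> *\<^sub>R e" "real_of_ereal (f (z + \<alpha> *\<^sub>R e))"] not_MInf[of "z + \<alpha> *\<^sub>R e"] assms(1,2)
    by (cases "f (z + \<alpha> *\<^sub>R e)") force+
qed

lemma f_eq_ereal_if_tight: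
  assumes feasible: "\<forall>h\<in>F. A h \<bullet> y + B h * T \<le> C h"
    and tight: "h \<in> F" "B h < 0" "A h \<bullet> y + B h * T = C h"
  shows "f y = ereal T"
proof -
  have le: "f y \<le> ereal T"
    using feasible le_iff by blast
  then obtain s where s: "f y = ereal s"
    using not_MInf[of y] by (cases "f y") auto
  then have "A h \<bullet> y + B h * s \<le> C h"
    using le_iff[of y s] tight(1) by simp
  then have "B h * s \<le> B h * T"
    using tight(3) by linarith
  then have "T \<le> s"
    using tight(2) by (simp add: mult_le_cancel_left_neg)
  with le s show ?thesis
    by simp
qed

lemma exists_tight_constraint:
  assumes "z \<in> dom_R f"
  shows "\<exists>h\<in>F. B h < 0 \<and> A h \<bullet> z + B h * real_of_ereal (f z) = C h"
proof (rule ccontr)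
  assume none: "\<not> ?thesis"
  define t0 where "t0 = real_of_ereal (f z)"
  have fz: "f z = ereal t0"
    using f_eq_ereal[OF assms] unfolding t0_def .
  have feasible: "A h \<bullet> z + B h * t0 \<le> C h" if "h \<in> F" for h
    using le_iff[of z t0] fz that by simp
  \<comment> \<open>otherwise \<open>(z, t0)\<close> could be lowered to \<open>(z, t0 - \<delta>)\<close> inside the epigraph\<close>
  have active: "A h \<bullet> 0 + B h * -1 \<le> 0" if "h \<in> F" "A h \<bullet> z + B h * t0 = C h" for h
    using none B_nonpos[OF assms that(1)] that unfolding t0_def by force
  obtain \<delta> where "0 < \<delta>"
    and step: "\<And>\<alpha> h. 0 \<le> \<alpha> \<Longrightarrow> \<alpha> \<le> \<delta> \<Longrightarrow> h \<in> F \<Longrightarrow>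
                 A h \<bullet> (z + \<alpha> *\<^sub>R 0) + B h * (t0 + \<alpha> * -1) \<le> C h"
    using small_step_feasible[of F A z B t0 C 0 "-1", OF finite_F feasible active] by blast
  then have "f z \<le> ereal (t0 - \<delta>)"
    using le_iff step[of \<delta>] by simp
  with fz \<open>0 < \<delta>\<close> show False
    by simp
qed

text \<open>A constraint with \<open>B h < 0\<close> bounds \<open>f\<close> below by the affine function
  \<open>x \<mapsto> (A h \<bullet> x - C h) / - B h\<close>, whose slope along \<open>e\<close> is \<open>A h \<bullet> e / - B h\<close>.\<close>
definition slopes :: "real^'n \<Rightarrow> real set" where
  "slopes e = (\<lambda>h. A h \<bullet> e / - B h) ` {h\<in>F. B h < 0}"

lemma finite_slopes: "finite (slopes e)"
  unfolding slopes_def using finite_F by simp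

lemma linear_near_if_no_wall:
  assumes z: "z \<in> dom_R f"
    and no_wall: "\<And>h. h \<in> F \<Longrightarrow> B h = 0 \<Longrightarrow> A h \<bullet> z = C h \<Longrightarrow> A h \<bullet> e \<le> 0"
  obtains q \<delta> where "q \<in> slopes e" "\<delta> > 0"
    "\<And>\<alpha>. 0 \<le> \<alpha> \<Longrightarrow> \<alpha> \<le> \<delta> \<Longrightarrow> f (z + \<alpha> *\<^sub>R e) = ereal (real_of_ereal (f z) + \<alpha> * q)"
proof -
  define t0 where "t0 = real_of_ereal (f z)"
  have feasible: "A h \<bullet> z + B h * t0 \<le> C h" if "h \<in> F" for h
    using le_iff[of z t0] f_eq_ereal[OF z] that unfolding t0_def by simp
  define H where "H = {h\<in>F. A h \<bullet> z + B h * t0 = C h \<and> B h < 0}"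
  define q where "q = Max ((\<lambda>h. A h \<bullet> e / - B h) ` H)"
  have "finite H" "H \<noteq> {}"
    using finite_F exists_tight_constraint[OF z] unfolding H_def t0_def by auto
  then have "q \<in> (\<lambda>h. A h \<bullet> e / - B h) ` H"
    unfolding q_def by (intro Max_in) auto
  then obtain hs where hs: "hs \<in> H" "q = A hs \<bullet> e / - B hs"
    by blast
  have active: "A h \<bullet> e + B h * q \<le> 0" if "h \<in> F" "A h \<bullet> z + B h * t0 = C h" for h
  proof (cases "B h = 0")
    case True
    then show ?thesis using no_wall[OF that(1) True] that(2) by simp
  next
    case False
    then have "h \<in> H"
      using B_nonpos[OF z that(1)] that unfolding H_def by simp
    then have "0 < - B h"
      unfolding H_def by simp
    have "A h \<bullet> e / - B h \<le> q"
      unfolding q_def using \<open>finite H\<close> \<open>h \<in> H\<close> by simp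
    then have "A h \<bullet> e \<le> q * - B h"
      by (rule pos_divide_le_eq[OF \<open>0 < - B h\<close>, THEN iffD1])
    then show ?thesis
      by (simp add: algebra_simps)
  qed
  obtain \<delta> where "0 < \<delta>"
    and step: "\<And>\<alpha> h. 0 \<le> \<alpha> \<Longrightarrow> \<alpha> \<le> \<delta> \<Longrightarrow> h \<in> F \<Longrightarrow>
                 A h \<bullet> (z + \<alpha> *\<^sub>R e) + B h * (t0 + \<alpha> * q) \<le> C h"
    using small_step_feasible[of F A z B t0 C e q, OF finite_F feasible active] by blast
  have "f (z + \<alpha> *\<^sub>R e) = ereal (t0 + \<alpha> * q)" if "0 \<le> \<alpha>" "\<alpha> \<le> \<delta>" for \<alpha>
  proof (rule f_eq_ereal_if_tight)
    show "\<forall>h\<in>F. A h \<bullet> (z + \<alpha> *\<^sub>R e) + B h * (t0 + \<alpha> * q) \<le> C h"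
      using step that by blast
    show "A hs \<bullet> (z + \<alpha> *\<^sub>R e) + B hs * (t0 + \<alpha> * q) = C hs"
      using hs unfolding H_def by (simp add: inner_add_right algebra_simps)
  qed (use hs in \<open>auto simp: H_def\<close>)
  moreover have "q \<in> slopes e"
    using hs unfolding slopes_def H_def by auto
  ultimately show thesis
    using that \<open>0 < \<delta>\<close> unfolding t0_def by blast
qed

lemma dirderiv_local_structure:
  assumes z: "z \<in> dom_R f"
  shows "dirderiv f z e \<in> insert \<infinity> (ereal ` slopes e)"
    and "\<exists>\<delta>>0. \<forall>\<alpha>. 0 \<le> \<alpha> \<longrightarrow> \<alpha> \<le> \<delta> \<longrightarrow> f (z + \<alpha> *\<^sub>R e) = f z + ereal \<alpha> * dirderiv f z e"
proof -
  have fz: "f z = ereal (real_of_ereal (f z))"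
    using f_eq_ereal[OF z] .
  have "dirderiv f z e \<in> insert \<infinity> (ereal ` slopes e) \<and>
        (\<exists>\<delta>>0. \<forall>\<alpha>. 0 \<le> \<alpha> \<longrightarrow> \<alpha> \<le> \<delta> \<longrightarrow> f (z + \<alpha> *\<^sub>R e) = f z + ereal \<alpha> * dirderiv f z e)"
  proof (cases "\<exists>h\<in>F. B h = 0 \<and> A h \<bullet> z = C h \<and> 0 < A h \<bullet> e")
    case True
    then obtain h where h: "h \<in> F" "B h = 0" "A h \<bullet> z = C h" "0 < A h \<bullet> e"
      by blast
    have PInf: "f (z + \<alpha> *\<^sub>R e) = f z + ereal \<alpha> * \<infinity>" if "0 < \<alpha>" for \<alpha>
      using PInf_beyond_wall[OF h that] that by (subst fz) simp
    then have D: "dirderiv f z e = \<infinity>"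
      using fz by (intro dirderiv_eqI[of _ _ _ 1]) auto
    have "f (z + \<alpha> *\<^sub>R e) = f z + ereal \<alpha> * dirderiv f z e" if "0 \<le> \<alpha>" for \<alpha>
      using PInf[of \<alpha>] that unfolding D by (cases "\<alpha> = 0") auto
    then show ?thesis
      using D by (intro conjI exI[of _ 1]) auto
  next
    case False
    then obtain q \<delta> where q: "q \<in> slopes e" "\<delta> > 0"
      "\<And>\<alpha>. 0 \<le> \<alpha> \<Longrightarrow> \<alpha> \<le> \<delta> \<Longrightarrow> f (z + \<alpha> *\<^sub>R e) = ereal (real_of_ereal (f z) + \<alpha> * q)"
      using linear_near_if_no_wall[OF z] by (metis not_le)
    then have lin: "f (z + \<alpha> *\<^sub>R e) = f z + ereal \<alpha> * ereal q" if "0 \<le> \<alpha>" "\<alpha> \<le> \<delta>" for \<alpha>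
      using that fz by (metis plus_ereal.simps(1) times_ereal.simps(1))
    then have "dirderiv f z e = ereal q"
      using fz q(2) by (intro dirderiv_eqI) auto
    then show ?thesis
      using q(1,2) lin by auto
  qed
  then show "dirderiv f z e \<in> insert \<infinity> (ereal ` slopes e)"
    and "\<exists>\<delta>>0. \<forall>\<alpha>. 0 \<le> \<alpha> \<longrightarrow> \<alpha> \<le> \<delta> \<longrightarrow> f (z + \<alpha> *\<^sub>R e) = f z + ereal \<alpha> * dirderiv f z e"
    by blast+
qed

lemma dirderiv_locally_linear:
  assumes "z \<in> dom_R f"
  obtains \<delta> where "0 < \<delta>"
    "\<And>\<alpha>. 0 \<le> \<alpha> \<Longrightarrow> \<alpha> \<le> \<delta> \<Longrightarrow> f (z + \<alpha> *\<^sub>R e) = f z + ereal \<alpha> * dirderiv f z e"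
  using dirderiv_local_structure(2)[OF assms] by blast

lemma ge_if_dirderiv_ge:
  assumes z: "z \<in> dom_R f" and D: "ereal p \<le> dirderiv f z e" and "0 \<le> \<alpha>"
  shows "f z + ereal (\<alpha> * p) \<le> f (z + \<alpha> *\<^sub>R e)"
proof (cases "\<alpha> = 0 \<or> f (z + \<alpha> *\<^sub>R e) = \<infinity>")
  case True
  then show ?thesis by auto
next
  case False
  then have \<alpha>: "0 < \<alpha>" and w: "z + \<alpha> *\<^sub>R e \<in> dom_R f"
    using \<open>0 \<le> \<alpha>\<close> dom_R_iff by auto
  define t0 tw where "t0 = real_of_ereal (f z)" and "tw = real_of_ereal (f (z + \<alpha> *\<^sub>R e))"
  have fz: "f z = ereal t0" and fw: "f (z + \<alpha> *\<^sub>R e) = ereal tw"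
    using f_eq_ereal[OF z] f_eq_ereal[OF w] unfolding t0_def tw_def by simp_all
  obtain \<delta> where "0 < \<delta>"
    and lin: "\<And>\<beta>. 0 \<le> \<beta> \<Longrightarrow> \<beta> \<le> \<delta> \<Longrightarrow> f (z + \<beta> *\<^sub>R e) = f z + ereal \<beta> * dirderiv f z e"
    by (rule dirderiv_locally_linear[OF z, of e]) blast
  define \<beta> where "\<beta> = min \<delta> \<alpha>"
  define \<theta> where "\<theta> = \<beta> / \<alpha>"
  have \<theta>: "0 < \<theta>" "\<theta> \<le> 1" "\<beta> = \<theta> * \<alpha>"
    using \<open>0 < \<delta>\<close> \<alpha> unfolding \<theta>_def \<beta>_def by auto
  have "z + \<beta> *\<^sub>R e = (1 - \<theta>) *\<^sub>R z + \<theta> *\<^sub>R (z + \<alpha> *\<^sub>R e)"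
    unfolding \<theta>(3) by (simp add: algebra_simps)
  then have convex: "f (z + \<beta> *\<^sub>R e) \<le> ereal ((1 - \<theta>) * t0 + \<theta> * tw)"
    using convex_ineq[OF z w] \<theta> unfolding t0_def tw_def by simp
  have linear: "f (z + \<beta> *\<^sub>R e) = ereal t0 + ereal \<beta> * dirderiv f z e"
    using lin[of \<beta>] \<open>0 < \<delta>\<close> \<alpha> fz unfolding \<beta>_def by simp
  show ?thesis
  proof (cases "dirderiv f z e")
    case (real q)
    then have "\<theta> * (\<alpha> * q) \<le> \<theta> * (tw - t0)"
      using convex linear \<theta>(3) by (simp add: algebra_simps)
    then have "\<alpha> * q \<le> tw - t0"
      using \<theta>(1) by simp
    moreover have "\<alpha> * p \<le> \<alpha> * q"
      using D real \<alpha> by simp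
    ultimately show ?thesis
      using fz fw by simp
  next
    case PInf
    then show ?thesis
      using convex linear \<theta> \<alpha> by simp
  next
    case MInf
    then show ?thesis
      using D by simp
  qed
qed

lemma dirderiv_le_if_le:
  assumes z: "z \<in> dom_R f" and "0 < \<epsilon>1"
    and le: "\<And>\<epsilon>. 0 < \<epsilon> \<Longrightarrow> \<epsilon> \<le> \<epsilon>1 \<Longrightarrow> f (z + \<epsilon> *\<^sub>R e) \<le> f z + ereal (\<epsilon> * p)"
  shows "dirderiv f z e \<le> ereal p"
proof -
  obtain \<delta> where "0 < \<delta>"
    and lin: "\<And>\<beta>. 0 \<le> \<beta> \<Longrightarrow> \<beta> \<le> \<delta> \<Longrightarrow> f (z + \<beta> *\<^sub>R e) = f z + ereal \<beta> * dirderiv f z e"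
    by (rule dirderiv_locally_linear[OF z, of e]) blast
  define \<beta> where "\<beta> = min \<delta> \<epsilon>1"
  have \<beta>: "0 < \<beta>" "\<beta> \<le> \<delta>" "\<beta> \<le> \<epsilon>1"
    using \<open>0 < \<delta>\<close> \<open>0 < \<epsilon>1\<close> unfolding \<beta>_def by auto
  have "ereal (real_of_ereal (f z)) + ereal \<beta> * dirderiv f z e
          \<le> ereal (real_of_ereal (f z)) + ereal (\<beta> * p)"
    using le[OF \<beta>(1,3)] lin[of \<beta>] \<beta> f_eq_ereal[OF z] by simp
  then show ?thesis
    using \<beta>(1) by (cases "dirderiv f z e") simp_all
qed

lemma finite_phi_image_dom: "finite (phi f ` dom_R f)"
proof (rule finite_subset)
  show "phi f ` dom_R f \<subseteq> insert \<infinity> (ereal ` (\<Union>i j. slopes (dvec i j)))"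
  proof
    fix v assume "v \<in> phi f ` dom_R f"
    then obtain z where z: "z \<in> dom_R f" and v: "v = phi f z"
      by blast
    obtain i j where "phi f z = dirderiv f z (dvec i j)"
      using phi_attained unfolding dderiv_eq_dirderiv by blast
    then have "v \<in> insert \<infinity> (ereal ` slopes (dvec i j))"
      using dirderiv_local_structure(1)[OF z] unfolding v by simp
    then show "v \<in> insert \<infinity> (ereal ` (\<Union>i j. slopes (dvec i j)))"
      by blast
  qed
  show "finite (insert \<infinity> (ereal ` (\<Union>i j. slopes (dvec i j))))"
    using finite_slopes by simp
qed

end

section \<open>The exchange lower bound\<close>

locale M_convex_fun = polyhedral_fun f F A B C
  for f :: "real^'n::finite \<Rightarrow> ereal" and F :: "'h set" and A B C +
  assumes M_convex: "M_convex f" and bounded_dom: "bounded (dom_R f)"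
begin

lemma exchange:
  assumes "x \<in> dom_R f" "y \<in> dom_R f" "y$i < x$i"
  obtains j \<epsilon>0 where "x$j < y$j" "0 < \<epsilon>0"
    "\<And>\<epsilon>. 0 \<le> \<epsilon> \<Longrightarrow> \<epsilon> \<le> \<epsilon>0 \<Longrightarrow> f (x - \<epsilon> *\<^sub>R dvec i j) + f (y + \<epsilon> *\<^sub>R dvec i j) \<le> f x + f y"
  using M_convex assms unfolding M_convex_def by fastforce

lemma exists_coordinate_less:
  assumes "x \<in> dom_R f" "y \<in> dom_R f" "x \<noteq> y"
  obtains i where "x$i < y$i"
proof -
  obtain k where "x$k \<noteq> y$k"
    using assms(3) by (auto simp: vec_eq_iff)
  then consider "x$k < y$k" | "y$k < x$k"
    by linarith
  then show thesis
    by cases (auto intro: that elim: exchange[OF assms(1,2)])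
qed

lemma dvec_steps_bounded:
  obtains M where "\<And>w l a b. w \<in> dom_R f \<Longrightarrow> w + l *\<^sub>R dvec a b \<in> dom_R f \<Longrightarrow> a \<noteq> b \<Longrightarrow> l \<le> M"
proof -
  obtain M where M: "\<And>y. y \<in> dom_R f \<Longrightarrow> norm y \<le> M"
    using bounded_dom unfolding bounded_iff by blast
  have "l \<le> 2 * M" if "w \<in> dom_R f" "w + l *\<^sub>R dvec a b \<in> dom_R f" "a \<noteq> b" for w l a b
  proof -
    have "l = (w + l *\<^sub>R dvec a b - w) $ a"
      using \<open>a \<noteq> b\<close> by (simp add: dvec_nth)
    then have "l \<le> norm (w + l *\<^sub>R dvec a b) + norm w"
      using component_le_norm_cart[of "w + l *\<^sub>R dvec a b - w" a]
        norm_triangle_ineq4[of "w + l *\<^sub>R dvec a b" w] by linarith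
    then show ?thesis
      using M[OF that(1)] M[OF that(2)] by linarith
  qed
  then show thesis
    by (rule that)
qed

definition lower_cone :: "real^'n \<Rightarrow> real \<Rightarrow> real^'n \<Rightarrow> real" where
  "lower_cone x p w = real_of_ereal (f x) + p / 2 * norm1 (w - x)"

lemma exchange_descent:
  assumes x: "x \<in> dom_R f" and y: "y \<in> dom_R f" "y \<noteq> x"
    and slopes: "\<And>i j. ereal p \<le> dirderiv f x (dvec i j)"
  obtains y' where "norm1 (y' - x) < norm1 (y - x)"
    "f y' \<le> ereal (real_of_ereal (f y) + p / 2 * (norm1 (y' - x) - norm1 (y - x)))"
proof -
  obtain i where i: "x$i < y$i"
    using exists_coordinate_less[OF x y(1)] y(2) by metis
  obtain j \<epsilon>0 where j: "y$j < x$j" "0 < \<epsilon>0"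
    and exch: "\<And>\<epsilon>. 0 \<le> \<epsilon> \<Longrightarrow> \<epsilon> \<le> \<epsilon>0 \<Longrightarrow>
                 f (y - \<epsilon> *\<^sub>R dvec i j) + f (x + \<epsilon> *\<^sub>R dvec i j) \<le> f y + f x"
    using exchange[OF y(1) x i] by metis
  define \<epsilon> where "\<epsilon> = min \<epsilon>0 (min (y$i - x$i) (x$j - y$j))"
  have \<epsilon>: "0 < \<epsilon>" "\<epsilon> \<le> \<epsilon>0" "\<epsilon> \<le> (y - x)$i" "(y - x)$j \<le> - \<epsilon>"
    using i j unfolding \<epsilon>_def by auto
  have "i \<noteq> j"
    using i j(1) by auto
  define y' where "y' = y - \<epsilon> *\<^sub>R dvec i j"
  have norm1_y': "norm1 (y' - x) = norm1 (y - x) - 2 * \<epsilon>"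
    unfolding y'_def using norm1_diff_dvec_eq[OF \<open>i \<noteq> j\<close> \<epsilon>(3,4)] \<epsilon>(1)
    by (simp add: algebra_simps)
  define tx ty where "tx = real_of_ereal (f x)" and "ty = real_of_ereal (f y)"
  have fx: "f x = ereal tx" and fy: "f y = ereal ty"
    using f_eq_ereal[OF x] f_eq_ereal[OF y(1)] unfolding tx_def ty_def by simp_all
  have "f y' + f (x + \<epsilon> *\<^sub>R dvec i j) \<le> ereal (ty + tx)"
    using exch[of \<epsilon>] \<epsilon> unfolding y'_def fx fy by simp
  moreover have "ereal (tx + \<epsilon> * p) \<le> f (x + \<epsilon> *\<^sub>R dvec i j)"
    using ge_if_dirderiv_ge[OF x slopes, of \<epsilon>] \<epsilon>(1) unfolding fx by simp
  ultimately have "f y' \<le> ereal (ty - \<epsilon> * p)"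
    using not_MInf[of y'] by (cases "f y'"; cases "f (x + \<epsilon> *\<^sub>R dvec i j)") auto
  then show thesis
    using that[of y'] norm1_y' \<epsilon>(1) unfolding ty_def by (simp add: algebra_simps)
qed

lemma lower_cone_le:
  assumes x: "x \<in> dom_R f" and slopes: "\<And>i j. ereal p \<le> dirderiv f x (dvec i j)"
  shows "ereal (lower_cone x p y) \<le> f y"
proof (cases "y \<in> dom_R f")
  case False
  then show ?thesis using dom_R_iff by simp
next
  case True
  define tx ty where "tx = real_of_ereal (f x)" and "ty = real_of_ereal (f y)"
  have fx: "f x = ereal tx" and fy: "f y = ereal ty"
    using f_eq_ereal[OF x] f_eq_ereal[OF True] unfolding tx_def ty_def by simp_all
  define c where "c = ty - p / 2 * norm1 (y - x)"
  define K where "K = {w. f w \<le> ereal (c + p / 2 * norm1 (w - x))}"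
  have "closed K"
    unfolding K_def by (intro closed_Collect_f_le continuous_intros continuous_on_norm1_diff)
  moreover have "K \<subseteq> dom_R f"
    unfolding K_def dom_R_def by (auto intro: le_less_trans)
  ultimately have "compact K"
    using bounded_subset[OF bounded_dom] by (simp add: compact_eq_bounded_closed)
  moreover have "y \<in> K"
    using fy unfolding K_def c_def by simp
  ultimately obtain z where z: "z \<in> K" "\<And>w. w \<in> K \<Longrightarrow> norm1 (z - x) \<le> norm1 (w - x)"
    using continuous_attains_inf[OF _ _ continuous_on_norm1_diff, of K x] by auto
  have "z = x"
  proof (rule ccontr)
    assume "z \<noteq> x"
    then obtain z' where z': "norm1 (z' - x) < norm1 (z - x)"
      "f z' \<le> ereal (real_of_ereal (f z) + p / 2 * (norm1 (z' - x) - norm1 (z - x)))"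
      using exchange_descent[OF x _ _ slopes] z(1) \<open>K \<subseteq> dom_R f\<close> by blast
    have "f z \<le> ereal (c + p / 2 * norm1 (z - x))"
      using z(1) unfolding K_def by simp
    then have "real_of_ereal (f z) \<le> c + p / 2 * norm1 (z - x)"
      using not_MInf[of z] by (cases "f z") auto
    then have "z' \<in> K"
      using z'(2) unfolding K_def by (auto simp: algebra_simps intro: order_trans)
    with z(2) z'(1) show False
      by (meson not_le)
  qed
  then have "f x \<le> ereal c"
    using z(1) unfolding K_def by simp
  then show ?thesis
    unfolding lower_cone_def c_def fx fy tx_def[symmetric] by simp
qed

lemma lower_cone_add_dvec_ge:
  assumes "p \<le> 0" "0 \<le> t"
  shows "lower_cone x p w + t * p \<le> lower_cone x p (w + t *\<^sub>R dvec a b)"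
proof -
  have "norm1 ((w - x) + t *\<^sub>R dvec a b) \<le> norm1 (w - x) + 2 * t"
    using norm1_add_dvec_le[OF assms(2)] .
  then have "p / 2 * (norm1 (w - x) + 2 * t) \<le> p / 2 * norm1 ((w - x) + t *\<^sub>R dvec a b)"
    using assms(1) by (intro mult_left_mono_neg) auto
  then show ?thesis
    unfolding lower_cone_def by (simp add: algebra_simps)
qed

lemma lower_cone_add_dvec_eq:
  assumes "a \<noteq> b" "0 \<le> (w - x)$a" "(w - x)$b \<le> 0" "0 \<le> t"
  shows "lower_cone x p (w + t *\<^sub>R dvec a b) = lower_cone x p w + t * p"
proof -
  have shift: "w + t *\<^sub>R dvec a b - x = (w - x) + t *\<^sub>R dvec a b"
    by (simp add: algebra_simps)
  show ?thesis
    unfolding lower_cone_def shift norm1_add_dvec_eq[OF assms] by (simp add: algebra_simps)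
qed

lemma lower_cone_diff_dvec_eq:
  assumes "a \<noteq> b" "t \<le> (w - x)$a" "(w - x)$b \<le> - t" "0 \<le> t"
  shows "lower_cone x p (w - t *\<^sub>R dvec a b) = lower_cone x p w - t * p"
proof -
  have shift: "w - t *\<^sub>R dvec a b - x = (w - x) - t *\<^sub>R dvec a b"
    by (simp add: algebra_simps)
  show ?thesis
    unfolding lower_cone_def shift norm1_diff_dvec_eq[OF assms] by (simp add: algebra_simps)
qed

end

section \<open>Tight points and PM-IncSlope\<close>

locale steepest_setting = M_convex_fun f F A B C
  for f :: "real^'n::finite \<Rightarrow> ereal" and F :: "'h set" and A B C +
  fixes x :: "real^'n" and p :: real
  assumes x_dom: "x \<in> dom_R f" and p_neg: "p < 0"
    and slopes_ge: "\<And>i j. ereal p \<le> dirderiv f x (dvec i j)"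
begin

lemma cone_le: "ereal (lower_cone x p w) \<le> f w"
  using lower_cone_le[OF x_dom slopes_ge] .

definition tight :: "real^'n \<Rightarrow> bool" where
  "tight w \<longleftrightarrow> f w = ereal (lower_cone x p w)"

lemma tight_x: "tight x"
  unfolding tight_def lower_cone_def by (simp add: f_eq_ereal[OF x_dom, symmetric])

lemma tight_dom: "tight w \<Longrightarrow> w \<in> dom_R f"
  unfolding tight_def dom_R_def by simp

lemma tight_obtain_ereal:
  assumes "tight w"
  obtains t where "f w = ereal t"
  using assms unfolding tight_def by blast

lemma tight_dirderiv_ge:
  assumes w: "tight w"
  shows "ereal p \<le> dirderiv f w (dvec a b)"
proof -
  obtain \<delta> where \<delta>: "0 < \<delta>" "f (w + \<delta> *\<^sub>R dvec a b) = f w + ereal \<delta> * dirderiv f w (dvec a b)"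
    by (rule dirderiv_locally_linear[OF tight_dom[OF w], of "dvec a b"]) auto
  have "lower_cone x p w + \<delta> * p \<le> lower_cone x p (w + \<delta> *\<^sub>R dvec a b)"
    using lower_cone_add_dvec_ge p_neg \<delta>(1) by simp
  then have "ereal (lower_cone x p w + \<delta> * p) \<le> f w + ereal \<delta> * dirderiv f w (dvec a b)"
    using cone_le[of "w + \<delta> *\<^sub>R dvec a b"] unfolding \<delta>(2) by (metis ereal_less_eq(3) order_trans)
  then show ?thesis
    using w \<delta>(1) unfolding tight_def by (cases "dirderiv f w (dvec a b)") simp_all
qed

lemma tight_steepest_signs:
  assumes w: "tight w" and "a \<noteq> b" and D: "dirderiv f w (dvec a b) \<le> ereal p"
  shows "0 \<le> (w - x)$a" "(w - x)$b \<le> 0"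
proof -
  obtain \<delta> where "0 < \<delta>"
    and lin: "\<And>\<alpha>. 0 \<le> \<alpha> \<Longrightarrow> \<alpha> \<le> \<delta> \<Longrightarrow>
                f (w + \<alpha> *\<^sub>R dvec a b) = f w + ereal \<alpha> * dirderiv f w (dvec a b)"
    by (rule dirderiv_locally_linear[OF tight_dom[OF w], of "dvec a b"]) blast
  have "dirderiv f w (dvec a b) = ereal p"
    using D tight_dirderiv_ge[OF w, of a b] by (rule antisym)
  then have step: "f (w + \<alpha> *\<^sub>R dvec a b) = ereal (lower_cone x p w + \<alpha> * p)"
    if "0 \<le> \<alpha>" "\<alpha> \<le> \<delta>" for \<alpha>
    using lin[OF that] w unfolding tight_def by simp
  have "\<not> norm1 ((w - x) + \<alpha> *\<^sub>R dvec a b) \<le> norm1 (w - x)" if "0 < \<alpha>" "\<alpha> \<le> \<delta>" for \<alpha>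
  proof
    assume "norm1 ((w - x) + \<alpha> *\<^sub>R dvec a b) \<le> norm1 (w - x)"
    then have "lower_cone x p w \<le> lower_cone x p (w + \<alpha> *\<^sub>R dvec a b)"
      unfolding lower_cone_def using p_neg by (simp add: algebra_simps mult_left_mono_neg)
    also have "ereal \<dots> \<le> ereal (lower_cone x p w + \<alpha> * p)"
      using cone_le[of "w + \<alpha> *\<^sub>R dvec a b"] step[of \<alpha>] that by simp
    finally show False
      using mult_pos_neg[OF that(1) p_neg] by simp
  qed
  then have far: "\<not> (\<alpha> \<le> - (w - x)$a \<or> \<alpha> \<le> (w - x)$b)" if "0 < \<alpha>" "\<alpha> \<le> \<delta>" for \<alpha>
    using norm1_add_dvec_le_self[OF \<open>a \<noteq> b\<close>, of \<alpha> "w - x"] that by auto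
  show "0 \<le> (w - x)$a"
    using far[of "- (w - x)$a"] far[of \<delta>] \<open>0 < \<delta>\<close> by linarith
  show "(w - x)$b \<le> 0"
    using far[of "(w - x)$b"] far[of \<delta>] \<open>0 < \<delta>\<close> by linarith
qed

lemma tight_along_steepest:
  assumes w: "tight w" and "a \<noteq> b" and D: "dirderiv f w (dvec a b) \<le> ereal p"
    and "0 \<le> l" and le: "f (w + l *\<^sub>R dvec a b) \<le> f w + ereal (l * p)"
  shows "f (w + l *\<^sub>R dvec a b) = f w + ereal (l * p)" "tight (w + l *\<^sub>R dvec a b)"
proof -
  have cone: "lower_cone x p (w + l *\<^sub>R dvec a b) = lower_cone x p w + l * p"
    using lower_cone_add_dvec_eq[OF \<open>a \<noteq> b\<close> tight_steepest_signs[OF w \<open>a \<noteq> b\<close> D] \<open>0 \<le> l\<close>] .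
  show eq: "f (w + l *\<^sub>R dvec a b) = f w + ereal (l * p)"
    using le cone_le[of "w + l *\<^sub>R dvec a b"] w unfolding tight_def cone by simp
  show "tight (w + l *\<^sub>R dvec a b)"
    using w unfolding tight_def eq cone by simp
qed

lemma steepest_segment_iff:
  assumes w: "tight w" and "a \<noteq> b" and D: "dirderiv f w (dvec a b) = ereal p"
  shows "(0 \<le> l \<and> f (w + l *\<^sub>R dvec a b) - f w = ereal l * dirderiv f w (dvec a b))
     \<longleftrightarrow> (0 \<le> l \<and> f (w + l *\<^sub>R dvec a b) \<le> f w + ereal (l * p))"
proof -
  obtain tw where fw: "f w = ereal tw"
    using tight_obtain_ereal[OF w] .
  have "f (w + l *\<^sub>R dvec a b) - ereal tw = ereal (l * p) \<longleftrightarrow>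
        f (w + l *\<^sub>R dvec a b) = ereal (tw + l * p)"
    using not_MInf[of "w + l *\<^sub>R dvec a b"] by (cases "f (w + l *\<^sub>R dvec a b)") auto
  then show ?thesis
    using tight_along_steepest(1)[OF w \<open>a \<noteq> b\<close>, of l] D unfolding fw by auto
qed

lemma cbar_greatest:
  assumes w: "tight w" and "a \<noteq> b" and D: "dirderiv f w (dvec a b) = ereal p"
  shows "0 \<le> cbar f w a b"
    and "f (w + cbar f w a b *\<^sub>R dvec a b) \<le> f w + ereal (cbar f w a b * p)"
    and "\<And>l. 0 \<le> l \<Longrightarrow> f (w + l *\<^sub>R dvec a b) \<le> f w + ereal (l * p) \<Longrightarrow> l \<le> cbar f w a b"
proof -
  obtain tw where fw: "f w = ereal tw"
    using tight_obtain_ereal[OF w] .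
  define L where "L = {l. 0 \<le> l \<and> f (w + l *\<^sub>R dvec a b) \<le> f w + ereal (l * p)}"
  obtain M where M: "\<And>l. w + l *\<^sub>R dvec a b \<in> dom_R f \<Longrightarrow> l \<le> M"
    using dvec_steps_bounded tight_dom[OF w] \<open>a \<noteq> b\<close> by metis
  have "L \<subseteq> {0..M}"
  proof
    fix l assume "l \<in> L"
    then have "0 \<le> l" and "w + l *\<^sub>R dvec a b \<in> dom_R f"
      unfolding L_def fw dom_R_def by (auto intro: le_less_trans)
    then show "l \<in> {0..M}"
      using M by simp
  qed
  moreover have "closed L"
  proof -
    have "L = {0..} \<inter> {l. f (w + l *\<^sub>R dvec a b) \<le> ereal (tw + l * p)}"
      unfolding L_def fw by auto
    also have "closed \<dots>"
      by (intro closed_Int closed_atLeast closed_Collect_f_le continuous_intros)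
    finally show ?thesis .
  qed
  ultimately have "compact L"
    using compact_Int_closed[OF compact_Icc] by (metis Int_absorb1)
  moreover have "0 \<in> L"
    unfolding L_def by simp
  ultimately obtain c where c: "c \<in> L" "\<And>l. l \<in> L \<Longrightarrow> l \<le> c"
    by (metis compact_attains_sup empty_iff)
  have "cbar f w a b = c"
    unfolding cbar_def dderiv_eq_dirderiv steepest_segment_iff[OF assms]
  proof (rule Greatest_equality)
    show "0 \<le> c \<and> f (w + c *\<^sub>R dvec a b) \<le> f w + ereal (c * p)"
      using c(1) unfolding L_def by blast
    show "l \<le> c" if "0 \<le> l \<and> f (w + l *\<^sub>R dvec a b) \<le> f w + ereal (l * p)" for l
      using c(2) that unfolding L_def by blast
  qed
  then show "0 \<le> cbar f w a b"
    and "f (w + cbar f w a b *\<^sub>R dvec a b) \<le> f w + ereal (cbar f w a b * p)"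
    and "\<And>l. 0 \<le> l \<Longrightarrow> f (w + l *\<^sub>R dvec a b) \<le> f w + ereal (l * p) \<Longrightarrow> l \<le> cbar f w a b"
    using c unfolding L_def by auto
qed

lemma cbar_pos:
  assumes w: "tight w" and "a \<noteq> b" and D: "dirderiv f w (dvec a b) = ereal p"
  shows "0 < cbar f w a b"
proof -
  obtain \<delta> where "0 < \<delta>" and "f (w + \<delta> *\<^sub>R dvec a b) = f w + ereal \<delta> * dirderiv f w (dvec a b)"
    by (rule dirderiv_locally_linear[OF tight_dom[OF w], of "dvec a b"]) auto
  then have "f (w + \<delta> *\<^sub>R dvec a b) \<le> f w + ereal (\<delta> * p)"
    unfolding D by simp
  with \<open>\<delta> > 0\<close> show ?thesis
    using cbar_greatest(3)[OF assms, of \<delta>] by simp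
qed

lemma tight_cbar_step:
  assumes w: "tight w" and "a \<noteq> b" and D: "dirderiv f w (dvec a b) = ereal p"
  shows "tight (w + cbar f w a b *\<^sub>R dvec a b)"
  using tight_along_steepest(2)[OF w \<open>a \<noteq> b\<close> eq_refl[OF D] cbar_greatest(1,2)[OF assms]] .

lemma dirderiv_cbar_step_gt:
  assumes w: "tight w" and "a \<noteq> b" and D: "dirderiv f w (dvec a b) = ereal p"
  shows "ereal p < dirderiv f (w + cbar f w a b *\<^sub>R dvec a b) (dvec a b)"
proof (rule ccontr)
  define c where "c = cbar f w a b"
  define u where "u = w + c *\<^sub>R dvec a b"
  have u: "tight u"
    using tight_cbar_step[OF assms] unfolding u_def c_def .
  assume "\<not> ?thesis"
  then have "dirderiv f u (dvec a b) \<le> ereal p"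
    unfolding u_def c_def by simp
  then have Du: "dirderiv f u (dvec a b) = ereal p"
    using tight_dirderiv_ge[OF u] by (rule antisym)
  obtain \<delta> where "0 < \<delta>" and "f (u + \<delta> *\<^sub>R dvec a b) = f u + ereal \<delta> * dirderiv f u (dvec a b)"
    by (rule dirderiv_locally_linear[OF tight_dom[OF u], of "dvec a b"]) auto
  then have "f (u + \<delta> *\<^sub>R dvec a b) = f u + ereal (\<delta> * p)"
    unfolding Du by simp
  moreover have "u + \<delta> *\<^sub>R dvec a b = w + (c + \<delta>) *\<^sub>R dvec a b"
    unfolding u_def by (simp add: algebra_simps)
  moreover obtain tw where fw: "f w = ereal tw"
    using tight_obtain_ereal[OF w] .
  moreover have "f u + ereal (\<delta> * p) \<le> ereal (tw + c * p + \<delta> * p)"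
    using add_right_mono[OF cbar_greatest(2)[OF assms], where c = "ereal (\<delta> * p)"]
    unfolding u_def c_def fw by simp
  ultimately have "f (w + (c + \<delta>) *\<^sub>R dvec a b) \<le> f w + ereal ((c + \<delta>) * p)"
    by (simp add: algebra_simps)
  then have "c + \<delta> \<le> c"
    using cbar_greatest(1)[OF assms] cbar_greatest(3)[OF assms, of "c + \<delta>"] \<open>\<delta> > 0\<close>
    unfolding c_def by simp
  with \<open>\<delta> > 0\<close> show False
    by simp
qed

lemma tight_exchange_bound:
  assumes W: "tight W" and u: "u \<in> dom_R f" and "s \<noteq> t" "0 \<le> \<epsilon>"
    and "\<epsilon> \<le> (W - x)$s" "(W - x)$t \<le> - \<epsilon>"
    and exch: "f (W - \<epsilon> *\<^sub>R dvec s t) + f (u + \<epsilon> *\<^sub>R dvec s t) \<le> f W + f u"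
  shows "f (u + \<epsilon> *\<^sub>R dvec s t) \<le> f u + ereal (\<epsilon> * p)"
proof -
  define tu where "tu = real_of_ereal (f u)"
  have fu: "f u = ereal tu"
    using f_eq_ereal[OF u] unfolding tu_def .
  have fW: "f W = ereal (lower_cone x p W)"
    using W unfolding tight_def .
  have "ereal (lower_cone x p W - \<epsilon> * p) \<le> f (W - \<epsilon> *\<^sub>R dvec s t)"
    using cone_le[of "W - \<epsilon> *\<^sub>R dvec s t"] lower_cone_diff_dvec_eq[OF assms(3,5,6,4)] by simp
  with exch show ?thesis
    unfolding fu fW using not_MInf[of "u + \<epsilon> *\<^sub>R dvec s t"]
    by (cases "f (W - \<epsilon> *\<^sub>R dvec s t)"; cases "f (u + \<epsilon> *\<^sub>R dvec s t)") auto
qed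

lemma dirderiv_le_if_tight_exchange:
  assumes W: "tight W" and u: "u \<in> dom_R f"
    and s: "0 < (W - x)$s" and t: "(W - x)$t < 0" and "0 < \<epsilon>0"
    and exch: "\<And>\<epsilon>. 0 \<le> \<epsilon> \<Longrightarrow> \<epsilon> \<le> \<epsilon>0 \<Longrightarrow>
                 f (W - \<epsilon> *\<^sub>R dvec s t) + f (u + \<epsilon> *\<^sub>R dvec s t) \<le> f W + f u"
  shows "dirderiv f u (dvec s t) \<le> ereal p"
proof (rule dirderiv_le_if_le[OF u])
  show "0 < min \<epsilon>0 (min ((W - x)$s) (- (W - x)$t))"
    using s t \<open>0 < \<epsilon>0\<close> by simp
  fix \<epsilon> assume "0 < \<epsilon>" "\<epsilon> \<le> min \<epsilon>0 (min ((W - x)$s) (- (W - x)$t))"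
  moreover have "s \<noteq> t"
    using s t by auto
  ultimately show "f (u + \<epsilon> *\<^sub>R dvec s t) \<le> f u + ereal (\<epsilon> * p)"
    by (intro tight_exchange_bound[OF W u] exch) auto
qed

lemma exchange_out_of_tight:
  assumes W: "tight W" and u: "u \<in> dom_R f" and "u$s < W$s" and s: "0 < (W - x)$s"
  obtains t where "W$t < u$t" "(W - x)$t < 0 \<Longrightarrow> dirderiv f u (dvec s t) \<le> ereal p"
proof -
  obtain t \<epsilon>0 where "W$t < u$t" "0 < \<epsilon>0"
    "\<And>\<epsilon>. 0 \<le> \<epsilon> \<Longrightarrow> \<epsilon> \<le> \<epsilon>0 \<Longrightarrow> f (W - \<epsilon> *\<^sub>R dvec s t) + f (u + \<epsilon> *\<^sub>R dvec s t) \<le> f W + f u"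
    using exchange[OF tight_dom[OF W] u \<open>u$s < W$s\<close>] by metis
  then show thesis
    using that dirderiv_le_if_tight_exchange[OF W u s] by blast
qed

lemma exchange_into_tight:
  assumes W: "tight W" and u: "u \<in> dom_R f" and "W$t < u$t" and t: "(W - x)$t < 0"
  obtains s where "u$s < W$s" "0 < (W - x)$s \<Longrightarrow> dirderiv f u (dvec s t) \<le> ereal p"
proof -
  obtain s \<epsilon>0 where "u$s < W$s" "0 < \<epsilon>0"
    and exch: "\<And>\<epsilon>. 0 \<le> \<epsilon> \<Longrightarrow> \<epsilon> \<le> \<epsilon>0 \<Longrightarrow>
                 f (u - \<epsilon> *\<^sub>R dvec t s) + f (W + \<epsilon> *\<^sub>R dvec t s) \<le> f u + f W"
    using exchange[OF u tight_dom[OF W] \<open>W$t < u$t\<close>] by metis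
  have "f (W - \<epsilon> *\<^sub>R dvec s t) + f (u + \<epsilon> *\<^sub>R dvec s t) \<le> f W + f u"
    if "0 \<le> \<epsilon>" "\<epsilon> \<le> \<epsilon>0" for \<epsilon>
    using exch[OF that] by (simp add: dvec_swap[of t s] add.commute)
  then show thesis
    using that \<open>u$s < W$s\<close> \<open>0 < \<epsilon>0\<close> dirderiv_le_if_tight_exchange[OF W u _ t] by blast
qed

lemma tight_extension_after_cbar_step:
  assumes u: "tight u" and "i \<noteq> j" and Dij: "dirderiv f u (dvec i j) = ereal p"
    and "a \<noteq> b" and Dle: "dirderiv f (u + cbar f u i j *\<^sub>R dvec i j) (dvec a b) \<le> ereal p"
  defines "W \<equiv> \<lambda>\<delta>. u + cbar f u i j *\<^sub>R dvec i j + \<delta> *\<^sub>R dvec a b"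
  obtains \<delta> where "0 < \<delta>" "tight (W \<delta>)" "a \<noteq> j" "b \<noteq> i"
    "0 < (W \<delta> - x)$a" "(W \<delta> - x)$b < 0"
proof -
  define c where "c = cbar f u i j"
  define u' where "u' = u + c *\<^sub>R dvec i j"
  have "0 < c"
    using cbar_pos[OF u \<open>i \<noteq> j\<close> Dij] unfolding c_def .
  have u': "tight u'"
    using tight_cbar_step[OF u \<open>i \<noteq> j\<close> Dij] unfolding u'_def c_def .
  have Du': "dirderiv f u' (dvec a b) = ereal p"
    using Dle tight_dirderiv_ge[OF u'] unfolding u'_def c_def by (rule antisym)
  have v: "0 \<le> (u - x)$i" "(u - x)$j \<le> 0"
    using tight_steepest_signs[OF u \<open>i \<noteq> j\<close>] Dij by simp_all
  have v': "0 \<le> (u' - x)$a" "(u' - x)$b \<le> 0"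
    using tight_steepest_signs[OF u' \<open>a \<noteq> b\<close>] Du' by simp_all
  have u'_nth: "(u' - x)$k = (u - x)$k + c * ((if k = i then 1 else 0) - (if k = j then 1 else 0))" for k
    unfolding u'_def by (simp add: dvec_nth)
  have "a \<noteq> j" "b \<noteq> i"
    using v v' u'_nth[of a] u'_nth[of b] \<open>0 < c\<close> \<open>i \<noteq> j\<close> by auto
  obtain \<delta> where "0 < \<delta>" and "f (u' + \<delta> *\<^sub>R dvec a b) = f u' + ereal \<delta> * dirderiv f u' (dvec a b)"
    by (rule dirderiv_locally_linear[OF tight_dom[OF u'], of "dvec a b"]) auto
  then have "f (u' + \<delta> *\<^sub>R dvec a b) = f u' + ereal (\<delta> * p)"
    unfolding Du' by simp
  then have "tight (W \<delta>)"
    using tight_along_steepest(2)[OF u' \<open>a \<noteq> b\<close> eq_refl[OF Du'], of \<delta>] \<open>0 < \<delta>\<close>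
    unfolding W_def u'_def c_def by simp
  moreover have "(W \<delta> - x)$k = (u' - x)$k + \<delta> * ((if k = a then 1 else 0) - (if k = b then 1 else 0))" for k
    unfolding W_def u'_def c_def by (simp add: dvec_nth)
  then have "0 < (W \<delta> - x)$a" "(W \<delta> - x)$b < 0"
    using v' \<open>0 < \<delta>\<close> \<open>a \<noteq> b\<close> by auto
  ultimately show thesis
    using that \<open>0 < \<delta>\<close> \<open>a \<noteq> j\<close> \<open>b \<noteq> i\<close> by blast
qed

lemma steepest_pair_after_cbar_step:
  assumes u: "tight u" and "i \<noteq> j" and Dij: "dirderiv f u (dvec i j) = ereal p"
    and "a \<noteq> b" and Dgt: "ereal p < dirderiv f u (dvec a b)"
    and Dle: "dirderiv f (u + cbar f u i j *\<^sub>R dvec i j) (dvec a b) \<le> ereal p"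
  shows "a \<noteq> i" "a \<noteq> j" "dirderiv f u (dvec a j) \<le> ereal p"
proof -
  define c where "c = cbar f u i j"
  obtain \<delta> where "0 < \<delta>" and "a \<noteq> j" "b \<noteq> i"
    and extension: "tight (u + c *\<^sub>R dvec i j + \<delta> *\<^sub>R dvec a b)"
      "0 < (u + c *\<^sub>R dvec i j + \<delta> *\<^sub>R dvec a b - x)$a"
      "(u + c *\<^sub>R dvec i j + \<delta> *\<^sub>R dvec a b - x)$b < 0"
    using tight_extension_after_cbar_step[OF assms(1-4) Dle] unfolding c_def by blast
  define W where "W = u + c *\<^sub>R dvec i j + \<delta> *\<^sub>R dvec a b"
  have W: "tight W" and Wa: "0 < (W - x)$a" and Wb: "(W - x)$b < 0"
    using extension unfolding W_def by simp_all
  have "0 < c"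
    using cbar_pos[OF u \<open>i \<noteq> j\<close> Dij] unfolding c_def .
  have v: "0 \<le> (u - x)$i" "(u - x)$j \<le> 0"
    using tight_steepest_signs[OF u \<open>i \<noteq> j\<close>] Dij by simp_all
  have W_nth: "W$k = u$k + c * ((if k = i then 1 else 0) - (if k = j then 1 else 0))
      + \<delta> * ((if k = a then 1 else 0) - (if k = b then 1 else 0))" for k
    unfolding W_def by (simp add: dvec_nth)
  have "u \<in> dom_R f"
    using tight_dom[OF u] .
  have "u$a < W$a"
    using W_nth[of a] \<open>a \<noteq> j\<close> \<open>a \<noteq> b\<close> \<open>0 < c\<close> \<open>0 < \<delta>\<close> by (cases "a = i") auto
  then obtain t where t: "W$t < u$t" "(W - x)$t < 0 \<Longrightarrow> dirderiv f u (dvec a t) \<le> ereal p"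
    using exchange_out_of_tight[OF W \<open>u \<in> dom_R f\<close>] Wa by blast
  have "t = j \<or> t = b"
    using t(1) W_nth[of t] \<open>0 < c\<close> \<open>0 < \<delta>\<close> by (auto split: if_splits)
  moreover have "(W - x)$j < 0" if "j \<noteq> b"
    using W_nth[of j] v(2) \<open>a \<noteq> j\<close> \<open>i \<noteq> j\<close> \<open>0 < c\<close> that by simp
  ultimately have "t = j" and Daj: "dirderiv f u (dvec a j) \<le> ereal p"
    using t(2) Wb Dgt by (metis not_le)+
  have "W$b < u$b"
    using W_nth[of b] \<open>b \<noteq> i\<close> \<open>a \<noteq> b\<close> \<open>0 < c\<close> \<open>0 < \<delta>\<close> by (cases "b = j") auto
  then obtain s where s: "u$s < W$s" "0 < (W - x)$s \<Longrightarrow> dirderiv f u (dvec s b) \<le> ereal p"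
    using exchange_into_tight[OF W \<open>u \<in> dom_R f\<close>] Wb by blast
  have "s = i \<or> s = a"
    using s(1) W_nth[of s] \<open>0 < c\<close> \<open>0 < \<delta>\<close> by (auto split: if_splits)
  moreover have "0 < (W - x)$i"
    using W_nth[of i] v(1) \<open>b \<noteq> i\<close> \<open>i \<noteq> j\<close> \<open>0 < c\<close> \<open>0 < \<delta>\<close> by (cases "i = a") auto
  ultimately show "a \<noteq> i"
    using s(2) Wa Dgt by (metis not_le)
  show "a \<noteq> j" "dirderiv f u (dvec a j) \<le> ereal p"
    using \<open>a \<noteq> j\<close> Daj by simp_all
qed

definition processed :: "real^'n \<Rightarrow> 'n set \<Rightarrow> bool" where
  "processed y I \<longleftrightarrow> tight y \<and> (\<forall>a\<in>I. \<forall>b. b \<noteq> a \<longrightarrow> ereal p < dirderiv f y (dvec a b))"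

definition partially_processed :: "real^'n \<Rightarrow> 'n set \<Rightarrow> 'n \<Rightarrow> 'n set \<Rightarrow> bool" where
  "partially_processed y I i J \<longleftrightarrow>
     processed y I \<and> (\<forall>b\<in>J. b \<noteq> i \<longrightarrow> ereal p < dirderiv f y (dvec i b))"

lemma partially_processed_incslope_step:
  assumes inv: "partially_processed y I i J" and "j \<noteq> i"
  shows "partially_processed (incslope_step f (ereal p) i j y) I i (insert j J)"
proof (cases "dirderiv f y (dvec i j) = ereal p")
  case True
  define y' where "y' = y + cbar f y i j *\<^sub>R dvec i j"
  have y: "tight y" and I: "\<And>a b. a \<in> I \<Longrightarrow> b \<noteq> a \<Longrightarrow> ereal p < dirderiv f y (dvec a b)"
    and J: "\<And>b. b \<in> J \<Longrightarrow> b \<noteq> i \<Longrightarrow> ereal p < dirderiv f y (dvec i b)"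
    using inv unfolding partially_processed_def processed_def by auto
  have "i \<noteq> j"
    using \<open>j \<noteq> i\<close> by simp
  note after = steepest_pair_after_cbar_step[OF y \<open>i \<noteq> j\<close> True]
  have "ereal p < dirderiv f y' (dvec a b)" if "a \<in> I" "b \<noteq> a" for a b
    using after[of a b] I[OF that] I[OF that(1), of j] that unfolding y'_def by fastforce
  moreover have "ereal p < dirderiv f y' (dvec i b)" if "b \<in> insert j J" "b \<noteq> i" for b
  proof (cases "b = j")
    case True
    then show ?thesis
      using dirderiv_cbar_step_gt[OF y \<open>i \<noteq> j\<close>] \<open>dirderiv f y (dvec i j) = ereal p\<close>
      unfolding y'_def by simp
  next
    case False
    then show ?thesis
      using after[of i b] J[of b] that unfolding y'_def by fastforce
  qed
  moreover have "incslope_step f (ereal p) i j y = y'"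
    unfolding incslope_step_def dderiv_eq_dirderiv y'_def using True by simp
  ultimately show ?thesis
    using tight_cbar_step[OF y \<open>i \<noteq> j\<close> True]
    unfolding partially_processed_def processed_def y'_def by auto
next
  case False
  then have "ereal p < dirderiv f y (dvec i j)"
    using tight_dirderiv_ge[of y i j] inv unfolding partially_processed_def processed_def by auto
  moreover have "incslope_step f (ereal p) i j y = y"
    unfolding incslope_step_def dderiv_eq_dirderiv using False by simp
  ultimately show ?thesis
    using inv unfolding partially_processed_def by auto
qed

lemma partially_processed_fold:
  assumes "partially_processed y I i J" "i \<notin> set js"
  shows "partially_processed (fold (\<lambda>j. incslope_step f (ereal p) i j) js y) I i (J \<union> set js)"
  using assms
proof (induction js arbitrary: y J)
  case Nil
  then show ?case by simp
next
  case (Cons j js)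
  then have "partially_processed (incslope_step f (ereal p) i j y) I i (insert j J)"
    by (intro partially_processed_incslope_step) auto
  from Cons.IH[OF this] Cons.prems(2) show ?case
    by simp
qed

lemma processed_fold:
  assumes "processed y I" "\<And>i. i \<in> set is \<Longrightarrow> set (js i) = UNIV - {i}"
  shows "processed (fold (\<lambda>i y. fold (\<lambda>j. incslope_step f (ereal p) i j) (js i) y) is y) (I \<union> set is)"
  using assms
proof (induction "is" arbitrary: y I)
  case Nil
  then show ?case by simp
next
  case (Cons i "is")
  have "partially_processed (fold (\<lambda>j. incslope_step f (ereal p) i j) (js i) y) I i ({} \<union> set (js i))"
    using Cons.prems by (intro partially_processed_fold) (auto simp: partially_processed_def)
  then have "processed (fold (\<lambda>j. incslope_step f (ereal p) i j) (js i) y) (insert i I)"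
    using Cons.prems(2)[of i] unfolding partially_processed_def processed_def by auto
  from Cons.IH[OF this] Cons.prems(2) show ?case
    by simp
qed

lemma pm_incslope_phi_gt:
  assumes "phi f x = ereal p" "valid_orders is js"
  shows "pm_incslope f is js x \<in> dom_R f \<and> ereal p < phi f (pm_incslope f is js x)"
proof -
  define y where "y = pm_incslope f is js x"
  have orders: "set is = UNIV" "\<And>i. i \<in> set is \<Longrightarrow> set (js i) = UNIV - {i}"
    using assms(2) unfolding valid_orders_def by auto
  have "processed x {}"
    using tight_x unfolding processed_def by simp
  from processed_fold[of x "{}" "is" js, OF this orders(2)] have "processed y UNIV"
    unfolding y_def pm_incslope_def assms(1) orders(1) by simp
  then have y: "tight y" and gt: "\<And>a b. b \<noteq> a \<Longrightarrow> ereal p < dirderiv f y (dvec a b)"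
    unfolding processed_def by auto
  obtain a b where ab: "phi f y = dirderiv f y (dvec a b)"
    using phi_attained[of f y] unfolding dderiv_eq_dirderiv by blast
  have "ereal p < phi f y"
  proof (cases "a = b")
    case True
    obtain t where "f y = ereal t"
      using tight_obtain_ereal[OF y] .
    then show ?thesis
      using ab dirderiv_zero[of f y t] True p_neg by simp
  next
    case False
    then show ?thesis
      using ab gt by simp
  qed
  with tight_dom[OF y] show ?thesis
    unfolding y_def by simp
qed

end

section \<open>Termination and optimality of PM-LSD2\<close>

context M_convex_fun
begin

lemma phi_finite_if_neg:
  assumes "z \<in> dom_R f" "phi f z < 0"
  obtains p where "phi f z = ereal p" "p < 0"
proof -
  obtain i j where ij: "phi f z = dirderiv f z (dvec i j)"
    using phi_attained unfolding dderiv_eq_dirderiv by blast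
  then have "phi f z \<noteq> -\<infinity>"
    using dirderiv_local_structure(1)[OF assms(1), of "dvec i j"] by auto
  with assms(2) show thesis
    using that by (cases "phi f z") auto
qed

lemma incslope_out_phi_gt:
  assumes z: "z \<in> dom_R f" and "phi f z < 0" and out: "incslope_out f z y"
  shows "y \<in> dom_R f \<and> phi f z < phi f y"
proof -
  obtain p where p: "phi f z = ereal p" "p < 0"
    using phi_finite_if_neg[OF assms(1,2)] .
  interpret steepest_setting f F A B C z p
    using z p phi_le_dderiv[of f z] M_convex_fun_axioms
    by (intro steepest_setting.intro steepest_setting_axioms.intro) (auto simp: dderiv_eq_dirderiv)
  show ?thesis
    using out pm_incslope_phi_gt[OF p(1)] p(1) unfolding incslope_out_def by auto
qed

lemma lsd2_run_dom:
  assumes run: "lsd2_run f x0 xs m" and "x0 \<in> dom_R f"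
  shows "k \<le> m \<Longrightarrow> xs k \<in> dom_R f"
proof (induction k)
  case 0
  then show ?case using assms unfolding lsd2_run_def by simp
next
  case (Suc k)
  then show ?case
    using run incslope_out_phi_gt[of "xs k" "xs (Suc k)"] unfolding lsd2_run_def by auto
qed

lemma no_infinite_lsd2_run:
  assumes "x0 \<in> dom_R f"
  shows "\<not> (\<exists>xs. \<forall>m. lsd2_run f x0 xs m)"
proof
  assume "\<exists>xs. \<forall>m. lsd2_run f x0 xs m"
  then obtain xs where run: "\<And>m. lsd2_run f x0 xs m"
    by blast
  have dom: "xs k \<in> dom_R f" for k
    using lsd2_run_dom[OF run assms order_refl] .
  have "phi f (xs k) < phi f (xs (Suc k))" for k
    using run[of "Suc k"] incslope_out_phi_gt[OF dom[of k]] unfolding lsd2_run_def by blast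
  then have "inj (\<lambda>k. phi f (xs k))"
    by (intro strict_mono_imp_inj_on strict_monoI_Suc)
  moreover have "range (\<lambda>k. phi f (xs k)) \<subseteq> phi f ` dom_R f"
    using dom by blast
  ultimately show False
    using finite_phi_image_dom by (meson finite_imageD finite_subset infinite_UNIV_nat)
qed

lemma minimizer_if_phi_nonneg:
  assumes z: "z \<in> dom_R f" and "\<not> phi f z < 0"
  shows "f z \<le> f y"
proof -
  have "ereal 0 \<le> dirderiv f z (dvec i j)" for i j
    using assms(2) phi_le_dderiv[of f z i j] unfolding dderiv_eq_dirderiv
    by (metis not_le order_trans zero_ereal_def)
  from lower_cone_le[OF z this] show ?thesis
    unfolding lower_cone_def by (simp add: f_eq_ereal[OF z, symmetric])
qed

end

lemma M_convex_fun_exists: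
  fixes f :: "real^'n::finite \<Rightarrow> ereal"
  assumes "M_convex f" "bounded (dom_R f)"
  obtains F :: "((real^'n) \<times> real) set set" and A B C where "M_convex_fun f F A B C"
proof -
  have "polyhedral_convex f"
    using assms(1) unfolding M_convex_def by simp
  then obtain F :: "((real^'n) \<times> real) set set" and A B C
    where "finite F" "\<And>x t. f x \<le> ereal t \<longleftrightarrow> (\<forall>h\<in>F. A h \<bullet> x + B h * t \<le> C h)"
    by (rule polyhedral_convex_inequality_rep) blast
  moreover have "f x \<noteq> -\<infinity>" for x
    using \<open>polyhedral_convex f\<close> unfolding polyhedral_convex_def by blast
  ultimately have "M_convex_fun f F A B C"
    using assms by unfold_locales auto
  then show thesis
    by (rule that)
qed

theorem mainTheorem18:
  fixes f :: "real^'n::finite \<Rightarrow> ereal" and x0 :: "real^'n"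
  assumes "M_convex f"
    and "bounded (dom_R f)"
    and "x0 \<in> dom_R f"
  shows "\<not> (\<exists>xs. \<forall>m. lsd2_run f x0 xs m) \<and>
         (\<forall>xs m. lsd2_run f x0 xs m \<and> \<not> phi f (xs m) < 0 \<longrightarrow>
            xs m \<in> dom_R f \<and> (\<forall>y. f (xs m) \<le> f y))"
proof -
  obtain F :: "((real^'n) \<times> real) set set" and A B C where "M_convex_fun f F A B C"
    using M_convex_fun_exists[OF assms(1,2)] .
  then interpret M_convex_fun f F A B C .
  show ?thesis
    using no_infinite_lsd2_run[OF assms(3)] lsd2_run_dom[OF _ assms(3)] minimizer_if_phi_nonneg
    by blast
qed

end
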